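(* For every infinite cardinal $\tau$ there exists a precompact (i.e. isomorphic to a subgroup of a compact group) Hausdorff Abelian topological group $G$ with $\psi(G)=\tau$, $d(G)=|G|=2^\tau$, and $w(G)=2^{2^\tau}$.
   Context: $\psi$ pseudocharacter, $d$ density, $w$ weight. *)

theory Defs
  imports "HOL-Analysis.Analysis" "HOL-Algebra.Algebra"
begin

definition topological_group :: "('g, 'm) monoid_scheme \<Rightarrow> 'g topology \<Rightarrow> bool" where
  "topological_group G T \<longleftrightarrow> group G \<and> topspace T = carrier G
     \<and> continuous_map (prod_topology T T) T (\<lambda>(x, y). x \<otimes>\<^bsub>G\<^esub> y)
     \<and> continuous_map T T (m_inv G)"

text \<open>Precompact (= totally bounded) topological group: every neighbourhood
of the identity covers the group by finitely many translates.\<close>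
definition precompact_group :: "('g, 'm) monoid_scheme \<Rightarrow> 'g topology \<Rightarrow> bool" where
  "precompact_group G T \<longleftrightarrow>
     (\<forall>U. openin T U \<and> \<one>\<^bsub>G\<^esub> \<in> U \<longrightarrow>
        (\<exists>F. finite F \<and> F \<subseteq> carrier G \<and> carrier G = (\<Union>x\<in>F. x <#\<^bsub>G\<^esub> U)))"

definition dense_in :: "'a topology \<Rightarrow> 'a set \<Rightarrow> bool" where
  "dense_in T D \<longleftrightarrow> D \<subseteq> topspace T \<and> T closure_of D = topspace T"

definition base_of :: "'a topology \<Rightarrow> 'a set set \<Rightarrow> bool" where
  "base_of T B \<longleftrightarrow> (\<forall>U\<in>B. openin T U) \<and>
     (\<forall>U. openin T U \<longrightarrow> (\<exists>B'\<subseteq>B. \<Union>B' = U))"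

definition density_is :: "'a topology \<Rightarrow> 'b rel \<Rightarrow> bool" where
  "density_is T r \<longleftrightarrow> (\<exists>D. dense_in T D \<and> ordIso2 (card_of D) r) \<and>
     (\<forall>D. dense_in T D \<longrightarrow> ordLeq2 r (card_of D))"

definition weight_is :: "'a topology \<Rightarrow> 'b rel \<Rightarrow> bool" where
  "weight_is T r \<longleftrightarrow> (\<exists>B. base_of T B \<and> ordIso2 (card_of B) r) \<and>
     (\<forall>B. base_of T B \<longrightarrow> ordLeq2 r (card_of B))"

definition pseudochar_at_le :: "'a topology \<Rightarrow> 'a \<Rightarrow> 'b rel \<Rightarrow> bool" where
  "pseudochar_at_le T x r \<longleftrightarrow>
     (\<exists>\<U>. (\<forall>U\<in>\<U>. openin T U) \<and> \<Inter>\<U> = {x} \<and> ordLeq2 (card_of \<U>) r)"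

text \<open>Pseudocharacter psi(X) = sup of the pointwise pseudocharacters equals the
cardinal r (r a cardinal on the type 'b; the supremum is taken among the
cardinals on that type).\<close>
definition pseudochar_is :: "'a topology \<Rightarrow> 'b rel \<Rightarrow> bool" where
  "pseudochar_is T r \<longleftrightarrow>
     (\<forall>x\<in>topspace T. pseudochar_at_le T x r) \<and>
     (\<forall>r'::'b rel. Card_order r' \<and> (\<forall>x\<in>topspace T. pseudochar_at_le T x r')
         \<longrightarrow> ordLeq2 r r')"

end

theory Submission
  imports Defs
begin

text \<open>
  Let \<open>\<tau> = |A|\<close>. The group is the Boolean group of finite families of subsets of \<open>A\<close>
  under symmetric difference, the direct sum of \<open>2^\<tau>\<close> copies of \<open>\<int>/2\<close>,
  transported onto the carrier \<open>Pow A\<close>. Every predicate \<open>\<phi>\<close> on subsets of \<open>A\<close>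
  gives a character counting mod 2 the members of a family that satisfy \<open>\<phi>\<close>, and the group
  carries the weakest topology making a chosen set \<open>H\<close> of these characters continuous into
  the discrete group \<open>\<int>/2\<close>. Any such topology is a precompact group topology: a basic
  neighbourhood of 1 is cut out by finitely many characters, so it has finite index.

  \<open>H\<close> consists of the \<open>\<tau>\<close> characters of the predicates \<open>F \<subseteq> _\<close> with
  \<open>F\<close> finite, and the \<open>2^2^\<tau>\<close> characters of the predicates \<open>_ \<in> \<W>\<close> with
  \<open>\<W>\<close> a family of infinite subsets of \<open>A\<close>. The former already separate points,
  which gives the Hausdorff property and \<open>\<psi> \<le> \<tau>\<close>. Fewer than \<open>\<tau>\<close>
  characters of \<open>H\<close> all vanish at \<open>{\<emptyset>, {a}}\<close> for some \<open>a\<close>, so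
  \<open>\<psi> \<ge> \<tau>\<close>. The character of \<open>{Y}\<close>, \<open>Y\<close> infinite, is nonzero
  at the family \<open>{Y}\<close>, but every point makes only finitely many of these characters nonzero,
  so a dense set has at least \<open>2^\<tau>\<close> points. Finally only finitely many characters of
  \<open>H\<close> vanish on a given neighbourhood of 1, so a base has at least \<open>2^2^\<tau>\<close> members.
\<close>

section \<open>Cardinal arithmetic\<close>

lemma card_of_not_ordLeq_imp_ordLess: "\<not> |A| \<le>o |B| \<Longrightarrow> |B| <o |A|"
  using not_ordLeq_iff_ordLess[OF card_of_Well_order card_of_Well_order] by blast

lemma card_of_UNION_finite_ordLess_infinite:
  assumes K: "infinite K" and I: "|I| <o |K|" and fin: "\<And>i. i \<in> I \<Longrightarrow> finite (f i)"
  shows "|\<Union>i\<in>I. f i| <o |K|"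
proof (cases "finite I")
  case True
  then show ?thesis using K fin by simp
next
  case False
  have "|\<Union>i\<in>I. f i| \<le>o |I|"
  proof (rule card_of_UNION_ordLeq_infinite[OF False])
    show "|I| \<le>o |I|" by simp
    show "\<forall>i\<in>I. |f i| \<le>o |I|"
      using fin False by (simp add: ordLess_imp_ordLeq)
  qed
  then show ?thesis using I ordLeq_ordLess_trans by blast
qed

lemma card_of_Pow_ordLeq_infinite_subsets:
  assumes "infinite A"
  shows "|Pow A| \<le>o |{Y \<in> Pow A. infinite Y}|"
proof (rule ccontr)
  assume "\<not> ?thesis"
  then have "|{Y \<in> Pow A. infinite Y}| <o |Pow A|"
    by (rule card_of_not_ordLeq_imp_ordLess)
  moreover have "|Fpow A| <o |Pow A|"
    using card_of_Fpow_infinite[OF assms] card_of_Pow ordIso_ordLess_trans by blast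
  ultimately have "|Fpow A \<union> {Y \<in> Pow A. infinite Y}| <o |Pow A|"
    using assms by (simp add: card_of_Un_ordLess_infinite)
  moreover have "Fpow A \<union> {Y \<in> Pow A. infinite Y} = Pow A"
    by (auto simp: Fpow_def)
  ultimately show False
    using ordLess_irreflexive by auto
qed

section \<open>Topologies induced by Boolean characters\<close>

definition char_nbhd :: "('g, 'm) monoid_scheme \<Rightarrow> ('g \<Rightarrow> bool) set \<Rightarrow> 'g \<Rightarrow> 'g set" where
  "char_nbhd G F x = {y \<in> carrier G. \<forall>\<xi>\<in>F. \<xi> y = \<xi> x}"

lemma char_nbhdI: "y \<in> carrier G \<Longrightarrow> (\<And>\<xi>. \<xi> \<in> F \<Longrightarrow> \<xi> y = \<xi> x) \<Longrightarrow> y \<in> char_nbhd G F x"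
  unfolding char_nbhd_def by (rule CollectI, rule conjI, assumption, rule ballI)

lemma char_nbhdD: "y \<in> char_nbhd G F x \<Longrightarrow> \<xi> \<in> F \<Longrightarrow> \<xi> y = \<xi> x"
  unfolding char_nbhd_def by (drule CollectD, erule conjE, erule bspec)

lemma char_nbhd_subset_carrier: "char_nbhd G F x \<subseteq> carrier G"
  unfolding char_nbhd_def by (rule Collect_subset)

lemma char_nbhd_carrier: "y \<in> char_nbhd G F x \<Longrightarrow> y \<in> carrier G"
  using char_nbhd_subset_carrier by (rule subsetD)

lemma char_nbhd_antimono:
  assumes "F \<subseteq> F'"
  shows "char_nbhd G F' x \<subseteq> char_nbhd G F x"
proof
  fix y assume y: "y \<in> char_nbhd G F' x"
  show "y \<in> char_nbhd G F x"
  proof (rule char_nbhdI)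
    show "y \<in> carrier G" by (rule char_nbhd_carrier[OF y])
    fix \<xi> assume "\<xi> \<in> F"
    with assms have "\<xi> \<in> F'" by blast
    then show "\<xi> y = \<xi> x" by (rule char_nbhdD[OF y])
  qed
qed

lemma char_nbhd_self: "x \<in> carrier G \<Longrightarrow> x \<in> char_nbhd G F x"
  by (rule char_nbhdI) simp_all

lemma char_nbhd_trans:
  assumes "y \<in> char_nbhd G F x"
  shows "char_nbhd G F y \<subseteq> char_nbhd G F x"
proof
  fix z assume z: "z \<in> char_nbhd G F y"
  show "z \<in> char_nbhd G F x"
  proof (rule char_nbhdI)
    show "z \<in> carrier G" by (rule char_nbhd_carrier[OF z])
    fix \<xi> assume "\<xi> \<in> F"
    then show "\<xi> z = \<xi> x" using char_nbhdD[OF z] char_nbhdD[OF assms] by (metis (full_types))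
  qed
qed

lemma char_nbhd_eq_pattern:
  "char_nbhd G F x = {y \<in> carrier G. {\<xi> \<in> F. \<xi> y} = {\<xi> \<in> F. \<xi> x}}"
proof -
  have "(\<forall>\<xi>\<in>F. \<xi> y = \<xi> x) \<longleftrightarrow> {\<xi> \<in> F. \<xi> y} = {\<xi> \<in> F. \<xi> x}" for y
  proof
    assume all: "\<forall>\<xi>\<in>F. \<xi> y = \<xi> x"
    show "{\<xi> \<in> F. \<xi> y} = {\<xi> \<in> F. \<xi> x}"
    proof (rule Collect_cong)
      fix \<xi>
      show "\<xi> \<in> F \<and> \<xi> y \<longleftrightarrow> \<xi> \<in> F \<and> \<xi> x"
      proof (cases "\<xi> \<in> F")
        case True
        then show ?thesis using bspec[OF all True] by simp
      qed simp
    qed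
  next
    assume eq: "{\<xi> \<in> F. \<xi> y} = {\<xi> \<in> F. \<xi> x}"
    show "\<forall>\<xi>\<in>F. \<xi> y = \<xi> x"
    proof
      fix \<xi> assume "\<xi> \<in> F"
      moreover have "\<xi> \<in> {\<xi> \<in> F. \<xi> y} \<longleftrightarrow> \<xi> \<in> {\<xi> \<in> F. \<xi> x}" by (simp only: eq)
      ultimately show "\<xi> y = \<xi> x" by simp
    qed
  qed
  then show ?thesis
    unfolding char_nbhd_def by (simp only:)
qed

lemma finite_char_nbhds:
  assumes "finite F"
  shows "finite (char_nbhd G F ` carrier G)"
proof -
  have "char_nbhd G F ` carrier G \<subseteq> (\<lambda>P. {y \<in> carrier G. {\<xi> \<in> F. \<xi> y} = P}) ` Pow F"
  proof
    fix N assume "N \<in> char_nbhd G F ` carrier G"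
    then obtain x where "N = char_nbhd G F x" by (elim imageE)
    then have "N = (\<lambda>P. {y \<in> carrier G. {\<xi> \<in> F. \<xi> y} = P}) {\<xi> \<in> F. \<xi> x}"
      by (simp only: char_nbhd_eq_pattern)
    moreover have "{\<xi> \<in> F. \<xi> x} \<in> Pow F" by simp
    ultimately show "N \<in> (\<lambda>P. {y \<in> carrier G. {\<xi> \<in> F. \<xi> y} = P}) ` Pow F"
      by (rule image_eqI)
  qed
  then show ?thesis
    by (rule finite_surj[OF iffD2[OF finite_Pow_iff assms]])
qed

definition char_open :: "('g, 'm) monoid_scheme \<Rightarrow> ('g \<Rightarrow> bool) set \<Rightarrow> 'g set \<Rightarrow> bool" where
  "char_open G H U \<longleftrightarrow> U \<subseteq> carrier G \<and> (\<forall>x\<in>U. \<exists>F. finite F \<and> F \<subseteq> H \<and> char_nbhd G F x \<subseteq> U)"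

text \<open>The initial topology of the maps \<open>\<xi> \<in> H\<close> into the discrete space \<open>bool\<close>.\<close>

definition char_topology :: "('g, 'm) monoid_scheme \<Rightarrow> ('g \<Rightarrow> bool) set \<Rightarrow> 'g topology" where
  "char_topology G H = topology (char_open G H)"

lemma istopology_char_open: "istopology (char_open G H)"
  unfolding istopology_def
proof (intro conjI allI impI)
  fix U V assume U: "char_open G H U" and V: "char_open G H V"
  have "\<exists>F. finite F \<and> F \<subseteq> H \<and> char_nbhd G F x \<subseteq> U \<inter> V" if x: "x \<in> U \<inter> V" for x
  proof -
    obtain F1 where F1: "finite F1" "F1 \<subseteq> H" "char_nbhd G F1 x \<subseteq> U"
      using U x unfolding char_open_def by blast
    obtain F2 where F2: "finite F2" "F2 \<subseteq> H" "char_nbhd G F2 x \<subseteq> V"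
      using V x unfolding char_open_def by blast
    have "char_nbhd G (F1 \<union> F2) x \<subseteq> char_nbhd G F1 x" "char_nbhd G (F1 \<union> F2) x \<subseteq> char_nbhd G F2 x"
      by (simp_all add: char_nbhd_antimono)
    then have "char_nbhd G (F1 \<union> F2) x \<subseteq> U \<inter> V"
      using F1(3) F2(3) by blast
    moreover have "finite (F1 \<union> F2)" "F1 \<union> F2 \<subseteq> H"
      using F1 F2 by simp_all
    ultimately show ?thesis by blast
  qed
  then show "char_open G H (U \<inter> V)"
    using U unfolding char_open_def by blast
next
  fix \<U> assume \<U>: "\<forall>U\<in>\<U>. char_open G H U"
  have "\<exists>F. finite F \<and> F \<subseteq> H \<and> char_nbhd G F x \<subseteq> \<Union>\<U>" if x: "x \<in> \<Union>\<U>" for x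
  proof -
    obtain U where "U \<in> \<U>" "x \<in> U"
      using x by blast
    moreover have "char_open G H U"
      using \<U> \<open>U \<in> \<U>\<close> by blast
    ultimately obtain F where "finite F" "F \<subseteq> H" "char_nbhd G F x \<subseteq> U"
      unfolding char_open_def by blast
    with \<open>U \<in> \<U>\<close> show ?thesis by blast
  qed
  moreover have "\<Union>\<U> \<subseteq> carrier G"
    using \<U> unfolding char_open_def by blast
  ultimately show "char_open G H (\<Union>\<U>)"
    unfolding char_open_def by blast
qed

lemma openin_char_topology:
  "openin (char_topology G H) U \<longleftrightarrow>
     U \<subseteq> carrier G \<and> (\<forall>x\<in>U. \<exists>F. finite F \<and> F \<subseteq> H \<and> char_nbhd G F x \<subseteq> U)"
  unfolding char_topology_def by (simp add: topology_inverse'[OF istopology_char_open] char_open_def)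

lemma openin_char_topologyE:
  assumes "openin (char_topology G H) U" "x \<in> U"
  obtains F where "finite F" "F \<subseteq> H" "char_nbhd G F x \<subseteq> U"
  using assms unfolding openin_char_topology by blast

lemma openin_char_nbhd:
  assumes "finite F" "F \<subseteq> H"
  shows "openin (char_topology G H) (char_nbhd G F x)"
  unfolding openin_char_topology
proof (intro conjI ballI)
  show "char_nbhd G F x \<subseteq> carrier G"
    by (rule char_nbhd_subset_carrier)
  fix y assume "y \<in> char_nbhd G F x"
  then have "char_nbhd G F y \<subseteq> char_nbhd G F x"
    by (rule char_nbhd_trans)
  with assms show "\<exists>F'. finite F' \<and> F' \<subseteq> H \<and> char_nbhd G F' y \<subseteq> char_nbhd G F x"
    by blast
qed

lemma topspace_char_topology [simp]: "topspace (char_topology G H) = carrier G"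
proof -
  have "openin (char_topology G H) (carrier G)"
    unfolding openin_char_topology
  proof (intro conjI ballI)
    fix x
    have "char_nbhd G {} x \<subseteq> carrier G"
      by (rule char_nbhd_subset_carrier)
    then show "\<exists>F. finite F \<and> F \<subseteq> H \<and> char_nbhd G F x \<subseteq> carrier G"
      by blast
  qed simp
  then have "carrier G \<subseteq> topspace (char_topology G H)"
    by (rule openin_subset)
  moreover have "topspace (char_topology G H) \<subseteq> carrier G"
    using openin_topspace[of "char_topology G H"] by (simp only: openin_char_topology)
  ultimately show ?thesis by (rule subset_antisym[rotated])
qed

lemma Hausdorff_char_topology:
  assumes sep: "\<And>x y. x \<in> carrier G \<Longrightarrow> y \<in> carrier G \<Longrightarrow> x \<noteq> y \<Longrightarrow> \<exists>\<xi>\<in>H. \<xi> x \<noteq> \<xi> y"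
  shows "Hausdorff_space (char_topology G H)"
  unfolding Hausdorff_space_def
proof (intro allI impI)
  fix x y
  assume "x \<in> topspace (char_topology G H) \<and> y \<in> topspace (char_topology G H) \<and> x \<noteq> y"
  then have x: "x \<in> carrier G" and y: "y \<in> carrier G" and "x \<noteq> y"
    by auto
  then obtain \<xi> where \<xi>: "\<xi> \<in> H" "\<xi> x \<noteq> \<xi> y"
    using sep by blast
  have "disjnt (char_nbhd G {\<xi>} x) (char_nbhd G {\<xi>} y)"
    unfolding disjnt_def
  proof (rule equals0I)
    fix z assume "z \<in> char_nbhd G {\<xi>} x \<inter> char_nbhd G {\<xi>} y"
    then have "\<xi> z = \<xi> x" "\<xi> z = \<xi> y"
      using char_nbhdD[of z G "{\<xi>}" _ \<xi>] by auto
    with \<xi>(2) show False by simp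
  qed
  moreover have "openin (char_topology G H) (char_nbhd G {\<xi>} x)"
    "openin (char_topology G H) (char_nbhd G {\<xi>} y)"
    using \<xi>(1) by (simp_all add: openin_char_nbhd)
  ultimately show "\<exists>U V. openin (char_topology G H) U \<and> openin (char_topology G H) V \<and>
      x \<in> U \<and> y \<in> V \<and> disjnt U V"
    using char_nbhd_self[OF x] char_nbhd_self[OF y] by blast
qed

lemma pseudochar_at_le_char_topology:
  assumes S: "S \<subseteq> H" "S \<noteq> {}" "|S| \<le>o r" and x: "x \<in> carrier G"
    and sep: "\<And>y. y \<in> carrier G \<Longrightarrow> y \<noteq> x \<Longrightarrow> \<exists>\<xi>\<in>S. \<xi> y \<noteq> \<xi> x"
  shows "pseudochar_at_le (char_topology G H) x r"
proof -
  define \<U> where "\<U> = (\<lambda>\<xi>. char_nbhd G {\<xi>} x) ` S"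
  have "openin (char_topology G H) U" if "U \<in> \<U>" for U
    using that S(1) unfolding \<U>_def by (auto intro: openin_char_nbhd)
  moreover have "\<Inter>\<U> = {x}"
  proof
    show "{x} \<subseteq> \<Inter>\<U>"
      unfolding \<U>_def using char_nbhd_self[OF x] by blast
    show "\<Inter>\<U> \<subseteq> {x}"
    proof
      fix y assume y: "y \<in> \<Inter>\<U>"
      have y_nbhd: "y \<in> char_nbhd G {\<xi>} x" if "\<xi> \<in> S" for \<xi>
        using y that unfolding \<U>_def by blast
      obtain \<xi>\<^sub>0 where "\<xi>\<^sub>0 \<in> S"
        using S(2) by blast
      then have "y \<in> carrier G"
        by (rule char_nbhd_carrier[OF y_nbhd])
      moreover have "\<xi> y = \<xi> x" if "\<xi> \<in> S" for \<xi>
        using char_nbhdD[OF y_nbhd[OF that], of \<xi>] by simp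
      ultimately show "y \<in> {x}"
        using sep by blast
    qed
  qed
  moreover have "|\<U>| \<le>o r"
    unfolding \<U>_def using card_of_image S(3) ordLeq_transitive by blast
  ultimately show ?thesis
    unfolding pseudochar_at_le_def by blast
qed

lemma dense_in_char_topology_imp_card_ordLeq:
  assumes K: "infinite K" and f: "f ` K \<subseteq> H"
    and w: "\<And>k. k \<in> K \<Longrightarrow> w k \<in> carrier G \<and> f k (w k)"
    and fin: "\<And>x. x \<in> carrier G \<Longrightarrow> finite {k \<in> K. f k x}"
    and D: "dense_in (char_topology G H) D"
  shows "|K| \<le>o |D|"
proof (rule ccontr)
  assume "\<not> |K| \<le>o |D|"
  then have less: "|D| <o |K|"
    by (rule card_of_not_ordLeq_imp_ordLess)
  have DG: "D \<subseteq> carrier G"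
    using D by (simp add: dense_in_def)
  have "k \<in> (\<Union>d\<in>D. {k \<in> K. f k d})" if k: "k \<in> K" for k
  proof -
    have "openin (char_topology G H) (char_nbhd G {f k} (w k))"
      using f k by (simp add: openin_char_nbhd image_subset_iff)
    moreover have "w k \<in> char_nbhd G {f k} (w k)"
      using w[OF k] by (simp add: char_nbhd_self)
    moreover have "\<forall>V. w k \<in> V \<and> openin (char_topology G H) V \<longrightarrow> (\<exists>d. d \<in> D \<and> d \<in> V)"
      using in_closure_of[of "w k" "char_topology G H" D] D[unfolded dense_in_def, THEN conjunct2] w[OF k]
      by simp
    ultimately obtain d where d: "d \<in> D" "d \<in> char_nbhd G {f k} (w k)"
      by blast
    then have "f k d"
      using char_nbhdD[OF d(2), of "f k"] w[OF k] by simp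
    with d(1) k show ?thesis by blast
  qed
  then have "|K| \<le>o |\<Union>d\<in>D. {k \<in> K. f k d}|"
    by (intro card_of_mono1) blast
  also have "|\<Union>d\<in>D. {k \<in> K. f k d}| <o |K|"
    using DG fin by (intro card_of_UNION_finite_ordLess_infinite[OF K less]) blast
  finally show False
    using ordLess_irreflexive by blast
qed

section \<open>Boolean characters of a group\<close>

text \<open>A character into \<open>\<int>/2\<close> is encoded as a predicate, addition in \<open>\<int>/2\<close>
  becoming \<open>\<noteq>\<close>.\<close>

locale bool_char_group = group G for G :: "('g, 'm) monoid_scheme" (structure) +
  fixes H :: "('g \<Rightarrow> bool) set"
  assumes char_mult:
    "\<xi> \<in> H \<Longrightarrow> x \<in> carrier G \<Longrightarrow> y \<in> carrier G \<Longrightarrow> \<xi> (x \<otimes> y) \<longleftrightarrow> \<xi> x \<noteq> \<xi> y"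
begin

lemma char_one: "\<xi> \<in> H \<Longrightarrow> \<not> \<xi> \<one>"
  using char_mult[of \<xi> \<one> \<one>] by auto

lemma char_inv: "\<xi> \<in> H \<Longrightarrow> x \<in> carrier G \<Longrightarrow> \<xi> (inv x) \<longleftrightarrow> \<xi> x"
  using char_mult[of \<xi> x "inv x"] char_one[of \<xi>] by auto

lemma char_nbhd_mult:
  assumes "F \<subseteq> H" "x \<in> carrier G" "y \<in> carrier G"
    and a: "a \<in> char_nbhd G F x" and b: "b \<in> char_nbhd G F y"
  shows "a \<otimes> b \<in> char_nbhd G F (x \<otimes> y)"
proof (rule char_nbhdI)
  have "a \<in> carrier G" "b \<in> carrier G"
    using a b by (simp_all add: char_nbhd_carrier)
  then show "a \<otimes> b \<in> carrier G" by simp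
  fix \<xi> assume "\<xi> \<in> F"
  then have "\<xi> \<in> H" "\<xi> a = \<xi> x" "\<xi> b = \<xi> y"
    using assms(1) char_nbhdD[OF a] char_nbhdD[OF b] by auto
  with assms(2,3) \<open>a \<in> carrier G\<close> \<open>b \<in> carrier G\<close> show "\<xi> (a \<otimes> b) = \<xi> (x \<otimes> y)"
    by (simp add: char_mult)
qed

lemma char_nbhd_inv:
  assumes "F \<subseteq> H" "x \<in> carrier G" and a: "a \<in> char_nbhd G F x"
  shows "inv a \<in> char_nbhd G F (inv x)"
proof (rule char_nbhdI)
  have "a \<in> carrier G"
    using a by (rule char_nbhd_carrier)
  then show "inv a \<in> carrier G" by simp
  fix \<xi> assume "\<xi> \<in> F"
  then have "\<xi> \<in> H" "\<xi> a = \<xi> x"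
    using assms(1) char_nbhdD[OF a] by auto
  with assms(2) \<open>a \<in> carrier G\<close> show "\<xi> (inv a) = \<xi> (inv x)"
    by (simp add: char_inv)
qed

lemma char_nbhd_eq_l_coset:
  assumes F: "F \<subseteq> H" and x: "x \<in> carrier G"
  shows "char_nbhd G F x = x <# char_nbhd G F \<one>"
proof
  show "x <# char_nbhd G F \<one> \<subseteq> char_nbhd G F x"
  proof
    fix y assume "y \<in> x <# char_nbhd G F \<one>"
    then obtain z where z: "z \<in> char_nbhd G F \<one>" and y: "y = x \<otimes> z"
      unfolding l_coset_def by blast
    have "x \<otimes> z \<in> char_nbhd G F (x \<otimes> \<one>)"
      using F x z char_nbhd_self[OF x] by (intro char_nbhd_mult) simp_all
    with x y show "y \<in> char_nbhd G F x" by simp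
  qed
  show "char_nbhd G F x \<subseteq> x <# char_nbhd G F \<one>"
  proof
    fix y assume y: "y \<in> char_nbhd G F x"
    have "inv x \<otimes> y \<in> char_nbhd G F (inv x \<otimes> x)"
      using F x y char_nbhd_self[of "inv x" G F] by (intro char_nbhd_mult) simp_all
    with x have "inv x \<otimes> y \<in> char_nbhd G F \<one>" by simp
    moreover have "y = x \<otimes> (inv x \<otimes> y)"
      using x char_nbhd_carrier[OF y] by (simp add: m_assoc[symmetric])
    ultimately show "y \<in> x <# char_nbhd G F \<one>"
      unfolding l_coset_def by blast
  qed
qed

lemma char_nbhd_oneD:
  assumes "F \<subseteq> H" "y \<in> char_nbhd G F \<one>" "\<xi> \<in> F"
  shows "\<not> \<xi> y"
  using char_nbhdD[OF assms(2,3)] char_one assms(1,3) by auto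

lemma char_nbhd_oneI:
  assumes "F \<subseteq> H" "y \<in> carrier G" "\<And>\<xi>. \<xi> \<in> F \<Longrightarrow> \<not> \<xi> y"
  shows "y \<in> char_nbhd G F \<one>"
  using assms char_one by (intro char_nbhdI) auto

lemma continuous_map_char_mult:
  "continuous_map (prod_topology (char_topology G H) (char_topology G H)) (char_topology G H)
     (\<lambda>(x, y). x \<otimes> y)"
  unfolding continuous_map_def
proof (intro conjI allI impI)
  let ?T = "char_topology G H"
  show "(\<lambda>(x, y). x \<otimes> y) \<in> topspace (prod_topology ?T ?T) \<rightarrow> topspace ?T"
    by auto
  fix U assume U: "openin ?T U"
  show "openin (prod_topology ?T ?T) {z \<in> topspace (prod_topology ?T ?T). (\<lambda>(x, y). x \<otimes> y) z \<in> U}"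
    unfolding openin_prod_topology_alt
  proof (intro allI impI)
    fix x y
    assume "(x, y) \<in> {z \<in> topspace (prod_topology ?T ?T). (\<lambda>(x, y). x \<otimes> y) z \<in> U}"
    then have x: "x \<in> carrier G" and y: "y \<in> carrier G" and "x \<otimes> y \<in> U"
      by auto
    then obtain F where F: "finite F" "F \<subseteq> H" "char_nbhd G F (x \<otimes> y) \<subseteq> U"
      using U unfolding openin_char_topology by blast
    have "char_nbhd G F x \<times> char_nbhd G F y
            \<subseteq> {z \<in> topspace (prod_topology ?T ?T). (\<lambda>(x, y). x \<otimes> y) z \<in> U}"
    proof
      fix z assume "z \<in> char_nbhd G F x \<times> char_nbhd G F y"
      then obtain a b where z: "z = (a, b)" and a: "a \<in> char_nbhd G F x" and b: "b \<in> char_nbhd G F y"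
        by blast
      have "a \<otimes> b \<in> U"
        using char_nbhd_mult[OF F(2) x y a b] F(3) by blast
      then show "z \<in> {z \<in> topspace (prod_topology ?T ?T). (\<lambda>(x, y). x \<otimes> y) z \<in> U}"
        using z char_nbhd_carrier[OF a] char_nbhd_carrier[OF b] by simp
    qed
    moreover have "openin ?T (char_nbhd G F x)" "openin ?T (char_nbhd G F y)"
      using F(1,2) by (simp_all add: openin_char_nbhd)
    ultimately show "\<exists>V W. openin ?T V \<and> openin ?T W \<and> x \<in> V \<and> y \<in> W \<and>
        V \<times> W \<subseteq> {z \<in> topspace (prod_topology ?T ?T). (\<lambda>(x, y). x \<otimes> y) z \<in> U}"
      using char_nbhd_self[OF x] char_nbhd_self[OF y] by blast
  qed
qed

lemma continuous_map_char_inv: "continuous_map (char_topology G H) (char_topology G H) (m_inv G)"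
  unfolding continuous_map_def
proof (intro conjI allI impI)
  let ?T = "char_topology G H"
  show "m_inv G \<in> topspace ?T \<rightarrow> topspace ?T"
    by simp
  fix U assume U: "openin ?T U"
  show "openin ?T {x \<in> topspace ?T. inv x \<in> U}"
    unfolding openin_char_topology
  proof (intro conjI ballI)
    show "{x \<in> topspace ?T. inv x \<in> U} \<subseteq> carrier G"
      by auto
    fix x assume "x \<in> {x \<in> topspace ?T. inv x \<in> U}"
    then have x: "x \<in> carrier G" and "inv x \<in> U"
      by auto
    then obtain F where F: "finite F" "F \<subseteq> H" "char_nbhd G F (inv x) \<subseteq> U"
      using U unfolding openin_char_topology by blast
    have "char_nbhd G F x \<subseteq> {x \<in> topspace ?T. inv x \<in> U}"
    proof
      fix a assume a: "a \<in> char_nbhd G F x"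
      have "inv a \<in> U"
        using char_nbhd_inv[OF F(2) x a] F(3) by blast
      then show "a \<in> {x \<in> topspace ?T. inv x \<in> U}"
        using char_nbhd_carrier[OF a] by simp
    qed
    with F(1,2) show "\<exists>F. finite F \<and> F \<subseteq> H \<and> char_nbhd G F x \<subseteq> {x \<in> topspace ?T. inv x \<in> U}"
      by blast
  qed
qed

lemma topological_group_char_topology: "topological_group G (char_topology G H)"
  unfolding topological_group_def
  using is_group continuous_map_char_mult continuous_map_char_inv by simp

lemma precompact_char_topology: "precompact_group G (char_topology G H)"
  unfolding precompact_group_def
proof (intro allI impI)
  fix U assume U: "openin (char_topology G H) U \<and> \<one> \<in> U"
  then have "U \<subseteq> carrier G"
    unfolding openin_char_topology by blast
  obtain F where F: "finite F" "F \<subseteq> H" "char_nbhd G F \<one> \<subseteq> U"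
    using U unfolding openin_char_topology by blast
  have "\<exists>R\<subseteq>carrier G. finite R \<and> char_nbhd G F ` carrier G = char_nbhd G F ` R"
    by (rule finite_subset_image[OF finite_char_nbhds[OF F(1)] subset_refl])
  then obtain R where R: "R \<subseteq> carrier G" "finite R" "char_nbhd G F ` carrier G = char_nbhd G F ` R"
    by blast
  have "y \<in> (\<Union>x\<in>R. x <#\<^bsub>G\<^esub> U)" if y: "y \<in> carrier G" for y
  proof -
    obtain x where "x \<in> R" and eq: "char_nbhd G F y = char_nbhd G F x"
      using y R(3) by blast
    have "y \<in> char_nbhd G F x"
      using char_nbhd_self[OF y, of F] unfolding eq .
    also have "\<dots> = x <#\<^bsub>G\<^esub> char_nbhd G F \<one>"
      using F(2) R(1) \<open>x \<in> R\<close> by (intro char_nbhd_eq_l_coset) auto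
    also have "\<dots> \<subseteq> x <#\<^bsub>G\<^esub> U"
      using F(3) unfolding l_coset_def by blast
    finally show ?thesis
      using \<open>x \<in> R\<close> by blast
  qed
  moreover have "(\<Union>x\<in>R. x <#\<^bsub>G\<^esub> U) \<subseteq> carrier G"
    using R(1) \<open>U \<subseteq> carrier G\<close> l_coset_subset_G by blast
  ultimately have "carrier G = (\<Union>x\<in>R. x <#\<^bsub>G\<^esub> U)"
    by blast
  with R(1,2) show "\<exists>R. finite R \<and> R \<subseteq> carrier G \<and> carrier G = (\<Union>x\<in>R. x <#\<^bsub>G\<^esub> U)"
    by blast
qed

lemma pseudochar_at_le_one_imp_card_ordLeq:
  assumes A: "infinite A"
    and kernel: "\<And>S. S \<subseteq> H \<Longrightarrow> |S| <o |A| \<Longrightarrow> \<exists>y\<in>carrier G. y \<noteq> \<one> \<and> (\<forall>\<xi>\<in>S. \<not> \<xi> y)"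
    and "pseudochar_at_le (char_topology G H) \<one> r"
  shows "|A| \<le>o r"
proof (rule ccontr)
  assume "\<not> |A| \<le>o r"
  obtain \<U> where \<U>: "\<forall>U\<in>\<U>. openin (char_topology G H) U" "\<Inter>\<U> = {\<one>}" "|\<U>| \<le>o r"
    using assms(3) unfolding pseudochar_at_le_def by blast
  with \<open>\<not> |A| \<le>o r\<close> have "|\<U>| <o |A|"
    using card_of_not_ordLeq_imp_ordLess ordLeq_transitive by blast
  have "\<exists>F. finite F \<and> F \<subseteq> H \<and> char_nbhd G F \<one> \<subseteq> U" if "U \<in> \<U>" for U
  proof -
    have "\<one> \<in> U" "openin (char_topology G H) U"
      using \<U>(1,2) that by blast+
    then show ?thesis
      by (meson openin_char_topologyE)
  qed
  then obtain FU where FU: "\<And>U. U \<in> \<U> \<Longrightarrow> finite (FU U) \<and> FU U \<subseteq> H \<and> char_nbhd G (FU U) \<one> \<subseteq> U"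
    by metis
  define S where "S = (\<Union>U\<in>\<U>. FU U)"
  have SH: "S \<subseteq> H"
    unfolding S_def using FU by blast
  have "|S| <o |A|"
    unfolding S_def using FU by (intro card_of_UNION_finite_ordLess_infinite[OF A \<open>|\<U>| <o |A|\<close>]) blast
  then obtain y where y: "y \<in> carrier G" "y \<noteq> \<one>" "\<forall>\<xi>\<in>S. \<not> \<xi> y"
    using kernel[OF SH] by blast
  have "y \<in> U" if "U \<in> \<U>" for U
  proof -
    have "y \<in> char_nbhd G (FU U) \<one>"
      using FU[OF that] y(1,3) that unfolding S_def by (intro char_nbhd_oneI) auto
    then show ?thesis
      using FU[OF that] by blast
  qed
  then have "y \<in> \<Inter>\<U>" by blast
  with \<U>(2) y(2) show False by blast
qed

lemma char_eq_on_char_nbhd: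
  assumes F: "F \<subseteq> H" and \<xi>: "\<xi> \<in> H" and vanish: "\<forall>z\<in>char_nbhd G F \<one>. \<not> \<xi> z"
    and x: "x \<in> carrier G" and y: "y \<in> char_nbhd G F x"
  shows "\<xi> y = \<xi> x"
proof -
  have "y \<in> x <#\<^bsub>G\<^esub> char_nbhd G F \<one>"
    using y char_nbhd_eq_l_coset[OF F x] by simp
  then obtain z where z: "z \<in> char_nbhd G F \<one>" "y = x \<otimes> z"
    unfolding l_coset_def by blast
  with vanish x char_nbhd_carrier[OF z(1)] show ?thesis
    by (simp add: char_mult[OF \<xi>])
qed

text \<open>A character vanishing on \<open>char_nbhd G F \<one>\<close> is constant on the finitely
  many cosets of it, so it is determined by its values at representatives of these cosets.\<close>

lemma finite_chars_vanishing_on_char_nbhd: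
  assumes F: "finite F" "F \<subseteq> H" and K: "K \<subseteq> H"
    and inj: "inj_on (\<lambda>\<xi>. restrict \<xi> (carrier G)) K"
  shows "finite {\<xi> \<in> K. \<forall>z\<in>char_nbhd G F \<one>. \<not> \<xi> z}"
proof -
  let ?V = "{\<xi> \<in> K. \<forall>z\<in>char_nbhd G F \<one>. \<not> \<xi> z}"
  have "\<exists>R\<subseteq>carrier G. finite R \<and> char_nbhd G F ` carrier G = char_nbhd G F ` R"
    by (rule finite_subset_image[OF finite_char_nbhds[OF F(1)] subset_refl])
  then obtain R where R: "R \<subseteq> carrier G" "finite R" "char_nbhd G F ` carrier G = char_nbhd G F ` R"
    by blast
  have "inj_on (\<lambda>\<xi>. {r \<in> R. \<xi> r}) ?V"
  proof (rule inj_onI)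
    fix \<xi> \<xi>' assume \<xi>: "\<xi> \<in> ?V" and \<xi>': "\<xi>' \<in> ?V" and eq: "{r \<in> R. \<xi> r} = {r \<in> R. \<xi>' r}"
    have "\<xi> x = \<xi>' x" if x: "x \<in> carrier G" for x
    proof -
      obtain r where r: "r \<in> R" "char_nbhd G F x = char_nbhd G F r"
        using x R(3) by blast
      then have rG: "r \<in> carrier G" and xr: "x \<in> char_nbhd G F r"
        using R(1) char_nbhd_self[OF x, of F] by auto
      have "\<xi> x = \<xi> r"
        using \<xi> K by (intro char_eq_on_char_nbhd[OF F(2) _ _ rG xr]) auto
      moreover have "\<xi>' x = \<xi>' r"
        using \<xi>' K by (intro char_eq_on_char_nbhd[OF F(2) _ _ rG xr]) auto
      moreover have "r \<in> {r \<in> R. \<xi> r} \<longleftrightarrow> r \<in> {r \<in> R. \<xi>' r}"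
        by (simp only: eq)
      ultimately show ?thesis
        using r(1) by simp
    qed
    then have "restrict \<xi> (carrier G) = restrict \<xi>' (carrier G)"
      by (rule restrict_ext)
    with inj \<xi> \<xi>' show "\<xi> = \<xi>'"
      by (auto dest: inj_onD)
  qed
  moreover have "(\<lambda>\<xi>. {r \<in> R. \<xi> r}) ` ?V \<subseteq> Pow R"
    by blast
  ultimately show ?thesis
    using inj_on_finite finite_Pow_iff R(2) by blast
qed

lemma base_of_char_topology_vanishingE:
  assumes B: "base_of (char_topology G H) B" and \<xi>: "\<xi> \<in> H"
  obtains b where "b \<in> B" "\<one> \<in> b" "\<forall>z\<in>b. \<not> \<xi> z"
proof -
  have "\<forall>U. openin (char_topology G H) U \<longrightarrow> (\<exists>B'\<subseteq>B. \<Union>B' = U)"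
    using B unfolding base_of_def by (rule conjunct2)
  moreover have "openin (char_topology G H) (char_nbhd G {\<xi>} \<one>)"
    using \<xi> by (simp add: openin_char_nbhd)
  ultimately obtain B' where "B' \<subseteq> B" "\<Union>B' = char_nbhd G {\<xi>} \<one>"
    by (elim allE impE exE conjE)
  moreover have "\<one> \<in> char_nbhd G {\<xi>} \<one>"
    by (simp add: char_nbhd_self)
  ultimately obtain b where b: "b \<in> B" "\<one> \<in> b" "b \<subseteq> char_nbhd G {\<xi>} \<one>"
    by blast
  have "\<not> \<xi> z" if "z \<in> b" for z
    using \<xi> b(3) that by (intro char_nbhd_oneD[of "{\<xi>}"]) auto
  with b(1,2) show ?thesis
    using that by blast
qed

text \<open>Characters are compared on the carrier only: their values outside it are arbitrary.\<close>

lemma base_of_char_topology_imp_card_ordLeq: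
  assumes K: "infinite K" "K \<subseteq> H" and inj: "inj_on (\<lambda>\<xi>. restrict \<xi> (carrier G)) K"
    and B: "base_of (char_topology G H) B"
  shows "|K| \<le>o |B|"
proof (rule ccontr)
  assume "\<not> |K| \<le>o |B|"
  then have "|B| <o |K|"
    by (rule card_of_not_ordLeq_imp_ordLess)
  define B\<^sub>1 where "B\<^sub>1 = {b \<in> B. \<one> \<in> b}"
  have "|B\<^sub>1| <o |K|"
    using card_of_mono1[of B\<^sub>1 B] \<open>|B| <o |K|\<close> ordLeq_ordLess_trans unfolding B\<^sub>1_def by blast
  define vanishing where "vanishing b = {\<xi> \<in> K. \<forall>z\<in>b. \<not> \<xi> z}" for b
  have "\<xi> \<in> (\<Union>b\<in>B\<^sub>1. vanishing b)" if "\<xi> \<in> K" for \<xi>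
  proof -
    obtain b where "b \<in> B" "\<one> \<in> b" "\<forall>z\<in>b. \<not> \<xi> z"
      using base_of_char_topology_vanishingE[OF B] \<open>\<xi> \<in> K\<close> K(2) by blast
    with \<open>\<xi> \<in> K\<close> show ?thesis
      unfolding B\<^sub>1_def vanishing_def by blast
  qed
  then have "|K| \<le>o |\<Union>b\<in>B\<^sub>1. vanishing b|"
    by (intro card_of_mono1) blast
  also have "|\<Union>b\<in>B\<^sub>1. vanishing b| <o |K|"
  proof (rule card_of_UNION_finite_ordLess_infinite[OF K(1) \<open>|B\<^sub>1| <o |K|\<close>])
    fix b assume "b \<in> B\<^sub>1"
    then have "openin (char_topology G H) b" "\<one> \<in> b"
      using B unfolding B\<^sub>1_def base_of_def by blast+
    then obtain F where F: "finite F" "F \<subseteq> H" "char_nbhd G F \<one> \<subseteq> b"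
      by (rule openin_char_topologyE)
    then have "vanishing b \<subseteq> {\<xi> \<in> K. \<forall>z\<in>char_nbhd G F \<one>. \<not> \<xi> z}"
      unfolding vanishing_def by blast
    then show "finite (vanishing b)"
      using finite_chars_vanishing_on_char_nbhd[OF F(1,2) K(2) inj] by (rule finite_subset)
  qed
  finally show False
    using ordLess_irreflexive by blast
qed

end

section \<open>The free Boolean group on \<open>2^|A|\<close> generators\<close>

definition symdiff :: "'a set \<Rightarrow> 'a set \<Rightarrow> 'a set" where
  "symdiff P Q = (P - Q) \<union> (Q - P)"

lemma symdiff_assoc: "symdiff (symdiff P Q) R = symdiff P (symdiff Q R)"
  unfolding symdiff_def by blast

lemma symdiff_commute: "symdiff P Q = symdiff Q P"
  unfolding symdiff_def by blast

lemma symdiff_empty_left [simp]: "symdiff {} P = P"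
  unfolding symdiff_def by blast

lemma symdiff_self [simp]: "symdiff P P = {}"
  unfolding symdiff_def by blast

lemma symdiff_eq_empty_iff: "symdiff P Q = {} \<longleftrightarrow> P = Q"
  unfolding symdiff_def by blast

lemma symdiff_in_Fpow: "P \<in> Fpow S \<Longrightarrow> Q \<in> Fpow S \<Longrightarrow> symdiff P Q \<in> Fpow S"
  unfolding symdiff_def Fpow_def by auto

lemma Collect_symdiff: "{Z \<in> symdiff P Q. \<phi> Z} = symdiff {Z \<in> P. \<phi> Z} {Z \<in> Q. \<phi> Z}"
  unfolding symdiff_def by blast

lemma odd_card_symdiff:
  assumes P: "finite P" and Q: "finite Q"
  shows "odd (card (symdiff P Q)) \<longleftrightarrow> odd (card P) \<noteq> odd (card Q)"
proof -
  have "card (symdiff P Q) = card (P - Q) + card (Q - P)"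
    unfolding symdiff_def using P Q by (intro card_Un_disjoint) auto
  moreover have "card (P - Q) = card P - card (P \<inter> Q)" "card (Q - P) = card Q - card (P \<inter> Q)"
    using P Q by (simp_all add: card_Diff_subset_Int Int_commute)
  moreover have "card (P \<inter> Q) \<le> card P" "card (P \<inter> Q) \<le> card Q"
    using P Q by (simp_all add: card_mono)
  ultimately show ?thesis
    by presburger
qed

text \<open>Take a maximal member of the family and pick, for every other member, a point of the
  maximal one that it misses.\<close>

lemma finite_subset_in_exactly_one:
  assumes S: "finite \<S>" "\<S> \<noteq> {}" "\<S> \<subseteq> Pow A"
  shows "\<exists>F\<in>Fpow A. card {Y \<in> \<S>. F \<subseteq> Y} = 1"
proof -
  obtain Y\<^sub>0 where Y\<^sub>0: "Y\<^sub>0 \<in> \<S>" "\<And>Y. Y \<in> \<S> \<Longrightarrow> Y\<^sub>0 \<subseteq> Y \<Longrightarrow> Y = Y\<^sub>0"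
    using finite_has_maximal[OF S(1,2)] by metis
  have "\<exists>a. a \<in> Y\<^sub>0 \<and> a \<notin> Y" if "Y \<in> \<S> - {Y\<^sub>0}" for Y
    using Y\<^sub>0(2) that by blast
  then obtain pick where pick: "\<And>Y. Y \<in> \<S> - {Y\<^sub>0} \<Longrightarrow> pick Y \<in> Y\<^sub>0 \<and> pick Y \<notin> Y"
    by metis
  define F where "F = pick ` (\<S> - {Y\<^sub>0})"
  have "F \<subseteq> Y\<^sub>0"
    unfolding F_def using pick by blast
  then have "F \<in> Fpow A"
    using Y\<^sub>0(1) S unfolding F_def Fpow_def by auto
  moreover have "{Y \<in> \<S>. F \<subseteq> Y} = {Y\<^sub>0}"
    using \<open>F \<subseteq> Y\<^sub>0\<close> Y\<^sub>0(1) pick unfolding F_def by blast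
  ultimately show ?thesis
    by (intro bexI[of _ F]) simp_all
qed

text \<open>The elements of the free Boolean group on \<open>Pow A\<close> are the finite families of
  subsets of \<open>A\<close>, added by symmetric difference. The bijection \<open>code\<close> moves the group
  onto the carrier \<open>Pow A\<close>, because the theorem asks for a group on \<open>'a set\<close>.\<close>

locale coded_free_boolean_group =
  fixes A :: "'a set" and code :: "'a set set \<Rightarrow> 'a set"
  assumes infinite_A: "infinite A" and bij_code: "bij_betw code (Fpow (Pow A)) (Pow A)"
begin

definition decode :: "'a set \<Rightarrow> 'a set set" where
  "decode = inv_into (Fpow (Pow A)) code"

definition FB :: "'a set monoid" where
  "FB = \<lparr>carrier = Pow A, mult = \<lambda>x y. code (symdiff (decode x) (decode y)), one = code {}\<rparr>"

definition parity_char :: "('a set \<Rightarrow> bool) \<Rightarrow> 'a set \<Rightarrow> bool" where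
  "parity_char \<phi> x \<longleftrightarrow> odd (card {Z \<in> decode x. \<phi> Z})"

definition subset_chars :: "('a set \<Rightarrow> bool) set" where
  "subset_chars = (\<lambda>F. parity_char (\<lambda>Y. F \<subseteq> Y)) ` Fpow A"

definition family_chars :: "('a set \<Rightarrow> bool) set" where
  "family_chars = (\<lambda>\<W>. parity_char (\<lambda>Y. Y \<in> \<W>)) ` Pow {Y \<in> Pow A. infinite Y}"

definition FB_chars :: "('a set \<Rightarrow> bool) set" where
  "FB_chars = subset_chars \<union> family_chars"

definition FB_topology :: "'a set topology" where
  "FB_topology = char_topology FB FB_chars"

lemma code_in_Pow: "m \<in> Fpow (Pow A) \<Longrightarrow> code m \<in> Pow A"
  using bij_betwE[OF bij_code] by blast

lemma decode_in_Fpow: "x \<in> Pow A \<Longrightarrow> decode x \<in> Fpow (Pow A)"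
  unfolding decode_def using bij_betwE[OF bij_betw_inv_into[OF bij_code]] by blast

lemma finite_decode: "x \<in> Pow A \<Longrightarrow> finite (decode x)"
  using decode_in_Fpow by (simp add: Fpow_def)

lemma code_decode: "x \<in> Pow A \<Longrightarrow> code (decode x) = x"
  unfolding decode_def by (rule bij_betw_inv_into_right[OF bij_code])

lemma decode_code: "m \<in> Fpow (Pow A) \<Longrightarrow> decode (code m) = m"
  unfolding decode_def by (rule bij_betw_inv_into_left[OF bij_code])

lemma carrier_FB [simp]: "carrier FB = Pow A"
  by (simp add: FB_def)

lemma mult_FB [simp]: "x \<otimes>\<^bsub>FB\<^esub> y = code (symdiff (decode x) (decode y))"
  by (simp add: FB_def)

lemma one_FB [simp]: "\<one>\<^bsub>FB\<^esub> = code {}"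
  by (simp add: FB_def)

lemma decode_mult:
  "x \<in> Pow A \<Longrightarrow> y \<in> Pow A \<Longrightarrow> decode (x \<otimes>\<^bsub>FB\<^esub> y) = symdiff (decode x) (decode y)"
  by (simp add: decode_code symdiff_in_Fpow decode_in_Fpow)

lemma comm_group_FB: "comm_group FB"
proof (rule comm_groupI)
  fix x y z assume x: "x \<in> carrier FB" and y: "y \<in> carrier FB" and z: "z \<in> carrier FB"
  show "x \<otimes>\<^bsub>FB\<^esub> y \<in> carrier FB"
    using x y code_in_Pow[OF symdiff_in_Fpow[OF decode_in_Fpow[of x] decode_in_Fpow[of y]]] by simp
  show "x \<otimes>\<^bsub>FB\<^esub> y \<otimes>\<^bsub>FB\<^esub> z = x \<otimes>\<^bsub>FB\<^esub> (y \<otimes>\<^bsub>FB\<^esub> z)"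
    using x y z by (simp add: decode_mult[simplified] symdiff_assoc)
  show "x \<otimes>\<^bsub>FB\<^esub> y = y \<otimes>\<^bsub>FB\<^esub> x"
    by (simp add: symdiff_commute)
  show "\<one>\<^bsub>FB\<^esub> \<otimes>\<^bsub>FB\<^esub> x = x"
    using x by (simp add: decode_code Fpow_def code_decode)
  have "x \<otimes>\<^bsub>FB\<^esub> x = \<one>\<^bsub>FB\<^esub>"
    by simp
  with x show "\<exists>y\<in>carrier FB. y \<otimes>\<^bsub>FB\<^esub> x = \<one>\<^bsub>FB\<^esub>"
    by blast
next
  show "\<one>\<^bsub>FB\<^esub> \<in> carrier FB"
    using code_in_Pow[of "{}"] by (simp add: Fpow_def)
qed

lemma parity_char_mult:
  assumes "x \<in> Pow A" "y \<in> Pow A"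
  shows "parity_char \<phi> (x \<otimes>\<^bsub>FB\<^esub> y) \<longleftrightarrow> parity_char \<phi> x \<noteq> parity_char \<phi> y"
  using assms unfolding parity_char_def decode_mult[OF assms] Collect_symdiff
  by (simp add: odd_card_symdiff finite_decode)

lemma parity_char_code:
  "m \<in> Fpow (Pow A) \<Longrightarrow> parity_char \<phi> (code m) \<longleftrightarrow> odd (card {Z \<in> m. \<phi> Z})"
  by (simp add: parity_char_def decode_code)

lemma parity_char_code_singleton:
  assumes "Y \<subseteq> A"
  shows "parity_char \<phi> (code {Y}) \<longleftrightarrow> \<phi> Y"
proof -
  have "{Y} \<in> Fpow (Pow A)"
    using assms by (simp add: Fpow_def)
  moreover have "{Z \<in> {Y}. \<phi> Z} = (if \<phi> Y then {Y} else {})"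
    by auto
  ultimately show ?thesis
    by (simp add: parity_char_code)
qed

lemma parity_char_code_doubleton:
  assumes "a \<in> A"
  shows "parity_char \<phi> (code {{}, {a}}) \<longleftrightarrow> \<phi> {} \<noteq> \<phi> {a}"
proof -
  have "{{}} \<in> Fpow (Pow A)" "{{a}} \<in> Fpow (Pow A)"
    using assms by (simp_all add: Fpow_def)
  then have "code {{}, {a}} = code {{}} \<otimes>\<^bsub>FB\<^esub> code {{a}}"
    by (auto simp: decode_code symdiff_def insert_commute)
  then have "parity_char \<phi> (code {{}, {a}}) \<longleftrightarrow> parity_char \<phi> (code {{}}) \<noteq> parity_char \<phi> (code {{a}})"
    using parity_char_mult[OF code_in_Pow code_in_Pow] \<open>{{}} \<in> Fpow (Pow A)\<close> \<open>{{a}} \<in> Fpow (Pow A)\<close>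
    by presburger
  with assms show ?thesis
    by (simp add: parity_char_code_singleton)
qed

sublocale bool_char_group FB FB_chars
proof (rule bool_char_group.intro)
  show "group FB"
    using comm_group_FB by (simp add: comm_group_def)
  show "bool_char_group_axioms FB FB_chars"
  proof (rule bool_char_group_axioms.intro)
    fix \<xi> x y assume "\<xi> \<in> FB_chars" "x \<in> carrier FB" "y \<in> carrier FB"
    then show "\<xi> (x \<otimes>\<^bsub>FB\<^esub> y) \<longleftrightarrow> \<xi> x \<noteq> \<xi> y"
      unfolding FB_chars_def subset_chars_def family_chars_def
      using parity_char_mult[of x y] by auto
  qed
qed

lemma subset_chars_separate:
  assumes x: "x \<in> Pow A" and y: "y \<in> Pow A" and "y \<noteq> x"
  shows "\<exists>\<xi>\<in>subset_chars. \<xi> y \<noteq> \<xi> x"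
proof -
  have "decode y \<noteq> decode x"
    using \<open>y \<noteq> x\<close> code_decode[OF x] code_decode[OF y] by metis
  then have "symdiff (decode y) (decode x) \<noteq> {}"
    by (simp add: symdiff_eq_empty_iff)
  moreover have "symdiff (decode y) (decode x) \<in> Fpow (Pow A)"
    using x y by (intro symdiff_in_Fpow decode_in_Fpow)
  ultimately obtain F where F: "F \<in> Fpow A" "card {Z \<in> symdiff (decode y) (decode x). F \<subseteq> Z} = 1"
    using finite_subset_in_exactly_one[of "symdiff (decode y) (decode x)" A] by (auto simp: Fpow_def)
  have "parity_char (\<lambda>Z. F \<subseteq> Z) (y \<otimes>\<^bsub>FB\<^esub> x)"
    using x y F(2) by (simp add: parity_char_def decode_mult[simplified])
  then have "parity_char (\<lambda>Z. F \<subseteq> Z) y \<noteq> parity_char (\<lambda>Z. F \<subseteq> Z) x"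
    using parity_char_mult[OF y x] by simp
  moreover have "parity_char (\<lambda>Z. F \<subseteq> Z) \<in> subset_chars"
    unfolding subset_chars_def using F(1) by blast
  ultimately show ?thesis
    by blast
qed

lemma Hausdorff_FB_topology: "Hausdorff_space FB_topology"
  unfolding FB_topology_def
proof (rule Hausdorff_char_topology)
  fix x y assume "x \<in> carrier FB" "y \<in> carrier FB" "x \<noteq> y"
  then obtain \<xi> where "\<xi> \<in> subset_chars" "\<xi> x \<noteq> \<xi> y"
    using subset_chars_separate[of y x] by auto
  then show "\<exists>\<xi>\<in>FB_chars. \<xi> x \<noteq> \<xi> y"
    unfolding FB_chars_def by (intro bexI[of _ \<xi>]) simp_all
qed

lemma card_of_subset_chars: "|subset_chars| \<le>o |A|"
  unfolding subset_chars_def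
  using card_of_image card_of_Fpow_infinite[OF infinite_A] ordLeq_ordIso_trans by blast

text \<open>The common zero is \<open>{\<emptyset>, {a}}\<close> with \<open>a\<close> outside all finite sets
  \<open>F\<close> whose characters occur: such a character sees both members or neither, and the
  characters of families of infinite sets see neither.\<close>

lemma common_kernel:
  assumes S: "S \<subseteq> FB_chars" "|S| <o |A|"
  shows "\<exists>y\<in>carrier FB. y \<noteq> \<one>\<^bsub>FB\<^esub> \<and> (\<forall>\<xi>\<in>S. \<not> \<xi> y)"
proof -
  have "\<exists>F. F \<in> Fpow A \<and> \<xi> = parity_char (\<lambda>Y. F \<subseteq> Y)" if "\<xi> \<in> S \<inter> subset_chars" for \<xi>
    using that unfolding subset_chars_def by blast
  then obtain F where F: "\<And>\<xi>. \<xi> \<in> S \<inter> subset_chars \<Longrightarrow> F \<xi> \<in> Fpow A \<and> \<xi> = parity_char (\<lambda>Y. F \<xi> \<subseteq> Y)"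
    by metis
  have "|S \<inter> subset_chars| <o |A|"
    using card_of_mono1[of "S \<inter> subset_chars" S] S(2) ordLeq_ordLess_trans by blast
  then have "|\<Union>\<xi>\<in>S \<inter> subset_chars. F \<xi>| <o |A|"
    using F by (intro card_of_UNION_finite_ordLess_infinite[OF infinite_A]) (auto simp: Fpow_def)
  then have "\<not> A \<subseteq> (\<Union>\<xi>\<in>S \<inter> subset_chars. F \<xi>)"
    using card_of_mono1 not_ordLess_ordLeq by metis
  then obtain a where a: "a \<in> A" "a \<notin> (\<Union>\<xi>\<in>S \<inter> subset_chars. F \<xi>)"
    by blast
  have "{{}, {a}} \<noteq> {}" "{{}, {a}} \<in> Fpow (Pow A)"
    using a(1) by (simp_all add: Fpow_def)
  then have "code {{}, {a}} \<noteq> code {}"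
    using decode_code[of "{{}, {a}}"] decode_code[of "{}"] by (metis empty_in_Fpow)
  moreover have "\<not> \<xi> (code {{}, {a}})" if "\<xi> \<in> S" for \<xi>
  proof (cases "\<xi> \<in> subset_chars")
    case True
    with that obtain E where "a \<notin> E" "\<xi> = parity_char (\<lambda>Y. E \<subseteq> Y)"
      using a(2) F by blast
    then show ?thesis
      using a(1) by (auto simp: parity_char_code_doubleton)
  next
    case False
    with that S(1) obtain \<W> where "\<W> \<subseteq> {Y \<in> Pow A. infinite Y}" "\<xi> = parity_char (\<lambda>Y. Y \<in> \<W>)"
      unfolding FB_chars_def family_chars_def by blast
    then show ?thesis
      using a(1) by (auto simp: parity_char_code_doubleton)
  qed
  moreover have "code {{}, {a}} \<in> carrier FB"
    using code_in_Pow[OF \<open>{{}, {a}} \<in> Fpow (Pow A)\<close>] by simp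
  ultimately show ?thesis
    by auto
qed

lemma pseudochar_is_FB_topology: "pseudochar_is FB_topology |A|"
  unfolding pseudochar_is_def FB_topology_def
proof (intro conjI ballI allI impI)
  fix x assume "x \<in> topspace (char_topology FB FB_chars)"
  then have "x \<in> carrier FB" by simp
  moreover have "subset_chars \<noteq> {}"
    unfolding subset_chars_def using Fpow_not_empty by blast
  ultimately show "pseudochar_at_le (char_topology FB FB_chars) x |A|"
    using card_of_subset_chars subset_chars_separate
    by (intro pseudochar_at_le_char_topology[of subset_chars]) (auto simp: FB_chars_def)
next
  fix r :: "'a rel"
  assume "Card_order r \<and> (\<forall>x\<in>topspace (char_topology FB FB_chars). pseudochar_at_le (char_topology FB FB_chars) x r)"
  then have "pseudochar_at_le (char_topology FB FB_chars) \<one>\<^bsub>FB\<^esub> r"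
    using one_closed by (simp only: topspace_char_topology)
  show "|A| \<le>o r"
  proof (rule pseudochar_at_le_one_imp_card_ordLeq[OF infinite_A])
    fix S assume "S \<subseteq> FB_chars" "|S| <o |A|"
    then show "\<exists>y\<in>carrier FB. y \<noteq> \<one>\<^bsub>FB\<^esub> \<and> (\<forall>\<xi>\<in>S. \<not> \<xi> y)"
      by (rule common_kernel)
  qed fact
qed

lemma infinite_infinite_subsets: "infinite {Y \<in> Pow A. infinite Y}"
  using card_of_ordLeq_infinite[OF card_of_Pow_ordLeq_infinite_subsets[OF infinite_A]] infinite_A
  by simp

lemma parity_char_singleton_imp_mem_decode:
  assumes "parity_char (\<lambda>Z. Z \<in> {Y}) x"
  shows "Y \<in> decode x"
proof (rule ccontr)
  assume "Y \<notin> decode x"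
  then have "{Z \<in> decode x. Z \<in> {Y}} = {}"
    by blast
  with assms show False
    unfolding parity_char_def by (simp only: card.empty) simp
qed

lemma density_is_FB_topology: "density_is FB_topology |Pow A|"
  unfolding density_is_def
proof (intro conjI exI allI impI)
  show "dense_in FB_topology (Pow A)"
    unfolding dense_in_def FB_topology_def
    using closure_of_topspace[of "char_topology FB FB_chars"] by simp
  show "ordIso2 (card_of (Pow A)) (card_of (Pow A))"
    by (rule card_of_refl)
  fix D assume D: "dense_in FB_topology D"
  have "|{Y \<in> Pow A. infinite Y}| \<le>o |D|"
  proof (rule dense_in_char_topology_imp_card_ordLeq[OF infinite_infinite_subsets])
    show "(\<lambda>Y. parity_char (\<lambda>Z. Z \<in> {Y})) ` {Y \<in> Pow A. infinite Y} \<subseteq> FB_chars"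
      unfolding FB_chars_def family_chars_def by blast
    fix Y assume "Y \<in> {Y \<in> Pow A. infinite Y}"
    then show "code {Y} \<in> carrier FB \<and> parity_char (\<lambda>Z. Z \<in> {Y}) (code {Y})"
      using code_in_Pow[of "{Y}"] by (simp add: parity_char_code_singleton Fpow_def)
  next
    fix x assume "x \<in> carrier FB"
    have "{Y \<in> {Y \<in> Pow A. infinite Y}. parity_char (\<lambda>Z. Z \<in> {Y}) x} \<subseteq> decode x"
      using parity_char_singleton_imp_mem_decode by blast
    moreover have "finite (decode x)"
      using \<open>x \<in> carrier FB\<close> by (simp add: finite_decode)
    ultimately show "finite {Y \<in> {Y \<in> Pow A. infinite Y}. parity_char (\<lambda>Z. Z \<in> {Y}) x}"
      by (rule finite_subset)
  qed (use D FB_topology_def in simp)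
  then show "|Pow A| \<le>o |D|"
    using card_of_Pow_ordLeq_infinite_subsets[OF infinite_A] ordLeq_transitive by blast
qed

lemma inj_on_family_chars:
  "inj_on (\<lambda>\<W>. restrict (parity_char (\<lambda>Y. Y \<in> \<W>)) (Pow A)) (Pow {Y \<in> Pow A. infinite Y})"
proof (rule inj_onI)
  fix \<W> \<W>'
  assume \<W>: "\<W> \<in> Pow {Y \<in> Pow A. infinite Y}" "\<W>' \<in> Pow {Y \<in> Pow A. infinite Y}"
    and eq: "restrict (parity_char (\<lambda>Y. Y \<in> \<W>)) (Pow A) = restrict (parity_char (\<lambda>Y. Y \<in> \<W>')) (Pow A)"
  have "Y \<in> \<W> \<longleftrightarrow> Y \<in> \<W>'" if "Y \<subseteq> A" for Y
  proof -
    have "code {Y} \<in> Pow A"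
      using that by (intro code_in_Pow) (simp add: Fpow_def)
    then have "parity_char (\<lambda>Y. Y \<in> \<W>) (code {Y}) = parity_char (\<lambda>Y. Y \<in> \<W>') (code {Y})"
      using fun_cong[OF eq, of "code {Y}"] by simp
    with that show ?thesis
      by (simp add: parity_char_code_singleton)
  qed
  with \<W> show "\<W> = \<W>'"
    by blast
qed

lemma base_of_FB_topology_card_ordLeq:
  assumes "base_of FB_topology B"
  shows "|Pow (Pow A)| \<le>o |B|"
proof -
  have "|Pow (Pow A)| \<le>o |Pow {Y \<in> Pow A. infinite Y}|"
    by (rule card_of_Pow_mono[OF card_of_Pow_ordLeq_infinite_subsets[OF infinite_A]])
  also have family: "|Pow {Y \<in> Pow A. infinite Y}| \<le>o |family_chars|"
    unfolding family_chars_def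
    using inj_on_imageI2[of "\<lambda>\<xi>. restrict \<xi> (Pow A)"] inj_on_family_chars
    by (intro card_of_ordLeq[THEN iffD1] exI[of _ "\<lambda>\<W>. parity_char (\<lambda>Y. Y \<in> \<W>)"]) (auto simp: comp_def)
  also have "|family_chars| \<le>o |B|"
  proof (rule base_of_char_topology_imp_card_ordLeq)
    show "infinite family_chars"
      using card_of_ordLeq_infinite[OF family] infinite_infinite_subsets by simp
    show "family_chars \<subseteq> FB_chars"
      by (simp add: FB_chars_def)
    show "inj_on (\<lambda>\<xi>. restrict \<xi> (carrier FB)) family_chars"
      unfolding family_chars_def using inj_on_family_chars
      by (simp add: inj_on_imageI comp_def)
    show "base_of (char_topology FB FB_chars) B"
      using assms by (simp add: FB_topology_def)
  qed
  finally show ?thesis .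
qed

lemma weight_is_FB_topology: "weight_is FB_topology |Pow (Pow A)|"
  unfolding weight_is_def
proof (intro conjI exI allI impI)
  let ?B = "{U. openin FB_topology U}"
  show "base_of FB_topology ?B"
    unfolding base_of_def by (auto intro: exI[of _ "{U}" for U])
  have "?B \<subseteq> Pow (Pow A)"
    using openin_subset by (fastforce simp: FB_topology_def)
  then have "|?B| \<le>o |Pow (Pow A)|"
    by (rule card_of_mono1)
  moreover have "|Pow (Pow A)| \<le>o |?B|"
    by (rule base_of_FB_topology_card_ordLeq) fact
  ultimately show "ordIso2 (card_of ?B) (card_of (Pow (Pow A)))"
    by (simp add: ordIso_iff_ordLeq)
next
  fix B assume "base_of FB_topology B"
  then show "|Pow (Pow A)| \<le>o |B|"
    by (rule base_of_FB_topology_card_ordLeq)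
qed

end

theorem mainTheorem13:
  fixes A :: "'a set"
  assumes "infinite A"
  shows "\<exists>(G :: 'a set monoid) (T :: 'a set topology).
           topological_group G T \<and> comm_group G \<and> Hausdorff_space T \<and>
           precompact_group G T \<and>
           pseudochar_is T (card_of A) \<and>
           density_is T (card_of (Pow A)) \<and>
           ordIso2 (card_of (carrier G)) (card_of (Pow A)) \<and>
           weight_is T (card_of (Pow (Pow A)))"
proof -
  have "ordIso2 (card_of (Fpow (Pow A))) (card_of (Pow A))"
    using assms by simp
  then obtain code where "bij_betw code (Fpow (Pow A)) (Pow A)"
    using card_of_ordIso by blast
  with assms interpret coded_free_boolean_group A code
    by unfold_locales
  show ?thesis
    using topological_group_char_topology Hausdorff_FB_topology comm_group_FB precompact_char_topology
      pseudochar_is_FB_topology density_is_FB_topology weight_is_FB_topology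
    by (intro exI[of _ FB] exI[of _ FB_topology]) (simp add: FB_topology_def card_of_refl)
qed

end
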